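(* Fix $t>1$ and define the sequence $(g_{n,t})_{n\ge0}$ by $g_{0,t}=1$ and $g_{n,t}=n\,g_{n-1,t}^{\,t}$ for $n\ge1$. Then for all $n\ge0$, $$g_{n,t}=\sigma_t^{\,t^n}\exp\!\left[\frac1t\frac{\partial\Phi}{\partial s}\!\left(\frac1t,0,n+1\right)\right]=\sigma_t^{\,t^n}\prod_{m=1}^{\infty}(m+n)^{-1/t^m},$$ where $\sigma_t=\prod_{n=1}^{\infty}n^{1/t^n}$.
   Context: $\Phi(z,s,u)$ is the Lerch transcendent: for $|z|<1$, $u>0$ and all $s\in\mathbb{C}$, $\Phi(z,s,u)=\sum_{n=0}^{\infty}\frac{z^n}{(n+u)^s}$; $\frac{\partial\Phi}{\partial s}$ is its partial derivative in $s$. *)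

theory Defs
  imports "HOL-Analysis.Analysis"
begin

definition lerch_phi :: "real \<Rightarrow> complex \<Rightarrow> real \<Rightarrow> complex" where
  "lerch_phi z s u = (\<Sum>n. complex_of_real (z ^ n) / (complex_of_real (real n + u)) powr s)"

fun gseq :: "nat \<Rightarrow> real \<Rightarrow> real" where
  "gseq 0 t = 1"
| "gseq (Suc n) t = real (Suc n) * (gseq n t) powr t"

definition sigma_t :: "real \<Rightarrow> real" where
  "sigma_t t = (\<Prod>k. real (k + 1) powr (1 / t ^ (k + 1)))"

end

(*
  Put L(u) = sum_k t^-k ln(k + u), so that -L(u) is the s-derivative at s = 0 of the Lerch
  series Phi(1/t, s, u), obtained by termwise differentiation (the derivative terms are
  O((k + 1) t^-k) uniformly on the disc |s| < 1/2).  Splitting off the first term gives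
  L(u) = ln u + L(u + 1) / t, which is the recursion ln g_n = ln n + t ln g_(n-1) in disguise:
  ln g_n = (t^n L(1) - L(n + 1)) / t.  Both infinite products are exponentials of convergent
  series, sigma_t = exp (L(1) / t) and prod_m (m + n) powr (-1 / t^m) = exp (- L(n + 1) / t).
*)
theory Submission
  imports Defs
begin

lemma exp_abs_ln_le:
  fixes x :: real
  assumes "x > 0"
  shows "exp \<bar>ln x\<bar> \<le> x + 1 / x"
proof -
  have "exp \<bar>ln x\<bar> \<le> exp (ln x) + exp (- ln x)"
    by (cases "ln x \<ge> 0") (simp_all add: add_increasing2 add_increasing)
  then show ?thesis
    using assms by (simp add: exp_minus inverse_eq_divide)
qed

lemma exp_abs_ln_shift_le:
  fixes u :: real
  assumes "u > 0"
  shows "exp \<bar>ln (real k + u)\<bar> \<le> (u + 1 / u) * real (Suc k)"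
proof -
  have "exp \<bar>ln (real k + u)\<bar> \<le> real k + u + 1 / (real k + u)"
    using exp_abs_ln_le[of "real k + u"] assms by simp
  also have "\<dots> \<le> real k + u + 1 / u"
    using assms by (simp add: frac_le)
  also have "\<dots> \<le> (u + 1 / u) * real (Suc k)"
  proof -
    have "1 \<le> u + 1 / u"
      using assms by (smt (verit, best) divide_nonneg_pos le_divide_eq_1)
    then have "real k \<le> (u + 1 / u) * real k"
      using mult_right_mono[of 1 "u + 1 / u" "real k"] by simp
    then show ?thesis by (simp add: algebra_simps)
  qed
  finally show ?thesis .
qed

definition lerch_log_series :: "real \<Rightarrow> real \<Rightarrow> real" where
  "lerch_log_series z u = (\<Sum>k. z ^ k * ln (real k + u))"

lemma summable_Suc_times_abs_power:
  fixes z :: real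
  assumes "\<bar>z\<bar> < 1"
  shows "summable (\<lambda>k. real (Suc k) * \<bar>z\<bar> ^ k)"
  using geometric_deriv_sums[of "\<bar>z\<bar>"] assms by (simp add: sums_iff)

lemma abs_ln_shift_times_power_le:
  fixes z u :: real
  assumes "u > 0"
  shows "\<bar>z ^ k * ln (real k + u)\<bar> \<le> (u + 1 / u) * (real (Suc k) * \<bar>z\<bar> ^ k)"
proof -
  have "\<bar>ln (real k + u)\<bar> \<le> exp \<bar>ln (real k + u)\<bar>"
    using exp_ge_add_one_self[of "\<bar>ln (real k + u)\<bar>"] by linarith
  also have "\<dots> \<le> (u + 1 / u) * real (Suc k)"
    using exp_abs_ln_shift_le[OF assms] .
  finally have "\<bar>z\<bar> ^ k * \<bar>ln (real k + u)\<bar> \<le> \<bar>z\<bar> ^ k * ((u + 1 / u) * real (Suc k))"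
    by (rule mult_left_mono) simp
  then show ?thesis
    by (simp add: abs_mult power_abs mult_ac)
qed

lemma summable_lerch_log_series:
  fixes z u :: real
  assumes "\<bar>z\<bar> < 1" "u > 0"
  shows "summable (\<lambda>k. z ^ k * ln (real k + u))"
proof (rule summable_comparison_test)
  show "\<exists>N. \<forall>k\<ge>N. norm (z ^ k * ln (real k + u)) \<le> (u + 1 / u) * (real (Suc k) * \<bar>z\<bar> ^ k)"
    using abs_ln_shift_times_power_le[OF assms(2)] by auto
  show "summable (\<lambda>k. (u + 1 / u) * (real (Suc k) * \<bar>z\<bar> ^ k))"
    using summable_Suc_times_abs_power[OF assms(1)] by (rule summable_mult)
qed

lemma lerch_log_series_shift:
  fixes z u :: real
  assumes "\<bar>z\<bar> < 1" "u > 0"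
  shows "lerch_log_series z u = ln u + z * lerch_log_series z (u + 1)"
proof -
  have "(\<Sum>k. z ^ Suc k * ln (real (Suc k) + u)) = lerch_log_series z u - ln u"
    using suminf_split_head[OF summable_lerch_log_series[OF assms]]
    by (simp add: lerch_log_series_def)
  moreover have "(\<lambda>k. z ^ Suc k * ln (real (Suc k) + u)) = (\<lambda>k. z * (z ^ k * ln (real k + (u + 1))))"
    by (simp add: algebra_simps)
  moreover have "summable (\<lambda>k. z ^ k * ln (real k + (u + 1)))"
    using summable_lerch_log_series[of z "u + 1"] assms by simp
  ultimately show ?thesis
    by (simp add: suminf_mult lerch_log_series_def)
qed

lemma lerch_phi_eq_exp_series:
  fixes z u :: real
  assumes "u > 0"
  shows "lerch_phi z s u = (\<Sum>k. of_real (z ^ k) * exp (- (s * of_real (ln (real k + u)))))"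
proof -
  have "complex_of_real (real k + u) powr s = exp (s * of_real (ln (real k + u)))" for k
  proof -
    have "real k + u > 0"
      using assms by simp
    then show ?thesis
      unfolding powr_def Ln_of_real[OF \<open>real k + u > 0\<close>] of_real_eq_0_iff by simp
  qed
  then have "complex_of_real (z ^ k) / complex_of_real (real k + u) powr s
      = of_real (z ^ k) * exp (- (s * of_real (ln (real k + u))))" for k
    by (simp add: exp_minus divide_inverse)
  then show ?thesis
    unfolding lerch_phi_def by presburger
qed

lemma abs_ln_shift_times_exp_le:
  fixes u r :: real
  assumes "u > 0" "\<bar>r\<bar> \<le> 1/2"
  shows "\<bar>ln (real k + u)\<bar> * exp (- r * ln (real k + u)) \<le> 2 * (u + 1 / u) * real (Suc k)"
proof -
  define c where "c = ln (real k + u)"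
  have "- r * c \<le> \<bar>r\<bar> * \<bar>c\<bar>"
    using abs_ge_self[of "- r * c"] by (simp only: abs_mult abs_minus_cancel)
  also have "\<dots> \<le> 1/2 * \<bar>c\<bar>"
    using assms(2) by (intro mult_right_mono) simp_all
  finally have "exp (- r * c) \<le> exp (\<bar>c\<bar> / 2)"
    by simp
  moreover have "\<bar>c\<bar> \<le> 2 * exp (\<bar>c\<bar> / 2)"
    using exp_ge_add_one_self[of "\<bar>c\<bar> / 2"] by linarith
  ultimately have "\<bar>c\<bar> * exp (- r * c) \<le> 2 * exp (\<bar>c\<bar> / 2) * exp (\<bar>c\<bar> / 2)"
    by (intro mult_mono) simp_all
  also have "\<dots> = 2 * exp \<bar>c\<bar>"
    by (simp flip: exp_add)
  also have "\<dots> \<le> 2 * (u + 1 / u) * real (Suc k)"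
    using exp_abs_ln_shift_le[OF assms(1), of k] unfolding c_def mult.assoc
    by (rule mult_left_mono) simp
  finally show ?thesis
    unfolding c_def .
qed

lemma lerch_phi_has_field_derivative_0:
  fixes z u :: real
  assumes "\<bar>z\<bar> < 1" "u > 0"
  shows "((\<lambda>s. lerch_phi z s u) has_field_derivative - of_real (lerch_log_series z u)) (at 0)"
proof -
  define c where "c k = ln (real k + u)" for k
  define f :: "nat \<Rightarrow> complex \<Rightarrow> complex"
    where "f k s = of_real (z ^ k) * exp (- (s * of_real (c k)))" for k s
  define f' :: "nat \<Rightarrow> complex \<Rightarrow> complex"
    where "f' k s = - of_real (z ^ k * c k) * exp (- (s * of_real (c k)))" for k s
  define M where "M k = 2 * (u + 1 / u) * real (Suc k) * \<bar>z\<bar> ^ k" for k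
  have deriv: "(f k has_field_derivative f' k s) (at s within ball 0 (1/2))" for k s
    unfolding f_def f'_def by (auto intro!: derivative_eq_intros)
  have "norm (f' k s) \<le> M k" if "s \<in> ball 0 (1/2)" for k s
  proof -
    have "\<bar>Re s\<bar> \<le> 1/2"
      using abs_Re_le_cmod[of s] that by simp
    from abs_ln_shift_times_exp_le[OF assms(2) this, of k]
    have "\<bar>z\<bar> ^ k * (\<bar>c k\<bar> * exp (- Re s * c k)) \<le> \<bar>z\<bar> ^ k * (2 * (u + 1 / u) * real (Suc k))"
      unfolding c_def by (rule mult_left_mono) simp
    then show ?thesis
      by (simp add: f'_def M_def norm_mult norm_exp_eq_Re abs_mult norm_power power_abs algebra_simps)
  qed
  moreover have "summable M"
    unfolding M_def using summable_mult[OF summable_Suc_times_abs_power[OF assms(1)], of "2 * (u + 1 / u)"]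
    by (simp add: mult.assoc)
  ultimately have uniform: "uniformly_convergent_on (ball 0 (1/2)) (\<lambda>n s. \<Sum>k<n. f' k s)"
    by (rule Weierstrass_m_test')
  have "summable (\<lambda>k. f k 0)"
    using assms(1) by (simp add: f_def flip: of_real_power)
  from has_field_derivative_series'(2)[OF convex_ball deriv uniform _ this, of 0]
  have "((\<lambda>s. \<Sum>k. f k s) has_field_derivative (\<Sum>k. f' k 0)) (at 0)"
    by simp
  moreover have "(\<lambda>k. f' k 0) sums - of_real (lerch_log_series z u)"
  proof -
    have "(\<lambda>k. z ^ k * c k) sums lerch_log_series z u"
      unfolding c_def lerch_log_series_def using summable_lerch_log_series[OF assms] by blast
    from sums_minus[OF sums_of_real[OF this]] show ?thesis
      unfolding f'_def by simp
  qed
  moreover have "(\<lambda>s. lerch_phi z s u) = (\<lambda>s. \<Sum>k. f k s)"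
    using lerch_phi_eq_exp_series[OF assms(2)] by (simp add: f_def c_def)
  ultimately show ?thesis
    by (simp add: sums_iff)
qed

lemma has_prod_powr_exp:
  fixes a e :: "nat \<Rightarrow> real"
  assumes "\<And>k. a k > 0" "(\<lambda>k. e k * ln (a k)) sums S"
  shows "(\<lambda>k. a k powr e k) has_prod exp S"
proof -
  have "(\<lambda>k. a k powr e k) = (\<lambda>k. exp (e k * ln (a k)))"
    using assms(1) by (simp add: powr_def less_imp_neq[symmetric] mult.commute)
  then show ?thesis
    unfolding has_prod_def using sums_imp_has_prod_exp[OF assms(2)] by simp
qed

lemma has_prod_powr_lerch_log_series:
  fixes t u c :: real
  assumes "\<bar>t\<bar> > 1" "u > 0"
  shows "(\<lambda>k. (real k + u) powr (c / t ^ (k + 1))) has_prod exp (c / t * lerch_log_series (1 / t) u)"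
proof (rule has_prod_powr_exp)
  show "real k + u > 0" for k
    using assms(2) by simp
  have "\<bar>1 / t\<bar> < 1"
    using assms(1) by simp
  then have "(\<lambda>k. (1 / t) ^ k * ln (real k + u)) sums lerch_log_series (1 / t) u"
    unfolding lerch_log_series_def using summable_lerch_log_series assms(2) by blast
  then have "(\<lambda>k. c / t * ((1 / t) ^ k * ln (real k + u))) sums (c / t * lerch_log_series (1 / t) u)"
    by (rule sums_mult)
  moreover have "c / t * ((1 / t) ^ k * ln (real k + u)) = c / t ^ (k + 1) * ln (real k + u)" for k
    by (simp add: power_one_over)
  ultimately show "(\<lambda>k. c / t ^ (k + 1) * ln (real k + u)) sums (c / t * lerch_log_series (1 / t) u)"
    by simp
qed

lemma gseq_eq_exp_lerch_log_series:
  fixes t :: real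
  assumes "\<bar>t\<bar> > 1"
  shows "gseq n t = exp ((t ^ n * lerch_log_series (1 / t) 1 - lerch_log_series (1 / t) (real n + 1)) / t)"
proof (induction n)
  case 0
  then show ?case by simp
next
  case (Suc n)
  let ?L = "lerch_log_series (1 / t)"
  have "t \<noteq> 0"
    using assms by auto
  have shift: "?L (real n + 1) = ln (real n + 1) + ?L (real (Suc n) + 1) / t"
    using lerch_log_series_shift[of "1 / t" "real n + 1"] assms by simp
  have "gseq (Suc n) t = real (Suc n) * exp (t ^ n * ?L 1 - ?L (real n + 1))"
    using Suc \<open>t \<noteq> 0\<close> by (simp add: powr_def)
  also have "\<dots> = exp (ln (real n + 1) + (t ^ n * ?L 1 - ?L (real n + 1)))"
    by (simp add: exp_add)
  also have "\<dots> = exp ((t ^ Suc n * ?L 1 - ?L (real (Suc n) + 1)) / t)"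
    using \<open>t \<noteq> 0\<close> by (subst shift) (simp add: field_simps)
  finally show ?case .
qed

theorem theorem20:
  fixes t :: real and n :: nat
  assumes "t > 1"
  shows "convergent_prod (\<lambda>k. real (k + 1) powr (1 / t ^ (k + 1)))
    \<and> convergent_prod (\<lambda>k. real (k + 1 + n) powr (- 1 / t ^ (k + 1)))
    \<and> (\<exists>D. ((\<lambda>s. lerch_phi (1 / t) s (real n + 1)) has_field_derivative D) (at 0)
         \<and> complex_of_real (gseq n t)
             = complex_of_real (sigma_t t powr (t ^ n)) * exp (D / complex_of_real t))
    \<and> gseq n t = sigma_t t powr (t ^ n) * (\<Prod>k. real (k + 1 + n) powr (- 1 / t ^ (k + 1)))"
proof -
  let ?L = "lerch_log_series (1 / t)"
  have t: "\<bar>t\<bar> > 1" "\<bar>1 / t\<bar> < 1"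
    using assms by simp_all
  have sigma: "(\<lambda>k. real (k + 1) powr (1 / t ^ (k + 1))) has_prod exp (?L 1 / t)"
    using has_prod_powr_lerch_log_series[OF t(1), of 1 1] by (simp add: add.commute)
  have tail: "(\<lambda>k. real (k + 1 + n) powr (- 1 / t ^ (k + 1))) has_prod exp (- ?L (real n + 1) / t)"
    using has_prod_powr_lerch_log_series[OF t(1), of "real n + 1" "- 1"] by (simp add: ac_simps)
  have sigma_powr: "sigma_t t powr (t ^ n) = exp (t ^ n * ?L 1 / t)"
    using sigma by (simp add: sigma_t_def has_prod_iff exp_powr_real)
  have gseq: "gseq n t = sigma_t t powr (t ^ n) * exp (- ?L (real n + 1) / t)"
    unfolding gseq_eq_exp_lerch_log_series[OF t(1)] sigma_powr
    by (simp add: diff_divide_distrib exp_diff exp_minus field_simps)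
  have "((\<lambda>s. lerch_phi (1 / t) s (real n + 1)) has_field_derivative - of_real (?L (real n + 1))) (at 0)"
    using lerch_phi_has_field_derivative_0[OF t(2)] by simp
  moreover have "exp (- of_real (?L (real n + 1)) / complex_of_real t) = of_real (exp (- ?L (real n + 1) / t))"
    by (simp flip: exp_of_real)
  ultimately show ?thesis
    using sigma tail gseq by (auto simp: has_prod_iff)
qed

end
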